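(* Let $\gamma:S^1\to\mathbb{R}^{2d}$ be a closed symplectically convex curve parametrized so that $\omega(\gamma'(t),\gamma''(t))=1$, and let $\Sigma=\{P:\exists t\in S^1,\ \omega(P-\gamma(t),\gamma'(t))=0,\ \omega(P-\gamma(t),\gamma''(t))=0\}$ be the wall. Then in a sufficiently small neighborhood of $\gamma$ the local multiplicity is either $0$ or $2$: every point $P\notin\Sigma$ sufficiently close to $\gamma$ either cannot be written as $P=\gamma(t)+v$ with $\omega(\gamma'(t),v)=0$, or can be written in this way in precisely two different ways, where in both cases one only considers representations with $\gamma(t)$ close to $P$ and $v$ small.
   Context: $\mathbb{R}^{2d}$ carries its standard symplectic form $\omega$; $\gamma$ is symplectically convex if $\omega(\gamma'(t),\gamma''(t))>0$ for all $t$. The multiplicity at a regular value $P$ of $\Psi(v,t)=\gamma(t)+v$ (defined on $\{(v,t):\omega(v,\gamma'(t))=0\}$) is the number of its preimages, i.e. of representations $P=\gamma(t)+v$ with $\omega(\gamma'(t),v)=0$; $\Sigma$ is the set of singular values of $\Psi$. *)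

theory Defs
  imports "HOL-Analysis.Analysis"
begin

text \<open>R^{2d} is modelled as R^d x R^d (q,p); the standard symplectic form is
  omega((q,p),(q',p')) = q . p' - p . q'.\<close>
definition symp :: "((real^'n) \<times> (real^'n)) \<Rightarrow> ((real^'n) \<times> (real^'n)) \<Rightarrow> real" where
  "symp x y = fst x \<bullet> snd y - snd x \<bullet> fst y"

definition wall :: "(real \<Rightarrow> (real^'n) \<times> (real^'n)) \<Rightarrow> (real \<Rightarrow> (real^'n) \<times> (real^'n))
     \<Rightarrow> (real \<Rightarrow> (real^'n) \<times> (real^'n)) \<Rightarrow> ((real^'n) \<times> (real^'n)) set" where
  "wall g g1 g2 = {P. \<exists>t. symp (P - g t) (g1 t) = 0 \<and> symp (P - g t) (g2 t) = 0}"

end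

theory Submission
  imports Defs
begin

(* Fix P near gamma(t0) and let f(t) = omega(gamma'(t), P - gamma(t)), so the representations
   counted are the zeros of f near t0. Because omega(gamma', gamma'') = 1, one has
   f' = omega(gamma'', P - gamma) and f'' = 1 + omega(gamma''', P - gamma). For P close to the
   curve, f is therefore strictly convex on [t0 - eps, t0 + eps], and a second-order Taylor bound
   (f(t0) and f'(t0) being small) makes it positive at both ends. By Rolle a strictly convex
   function has at most two zeros; P off the wall means every zero is simple, hence a sign
   change, which forces a second zero. Periodicity makes all bounds uniform in t0. *)

lemma periodic_shift_int:
  fixes f :: "real \<Rightarrow> 'a"
  assumes periodic: "\<And>t. f (t + L) = f t"
  shows "f (t + of_int n * L) = f t"
proof -
  have shift_nat: "f (s + of_nat m * L) = f s" for m :: nat and s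
    by (induction m) (simp_all add: algebra_simps periodic[of "s + of_nat _ * L", simplified algebra_simps])
  show ?thesis
  proof (cases "n \<ge> 0")
    case True
    then show ?thesis using shift_nat[of t "nat n"] by simp
  next
    case False
    then show ?thesis using shift_nat[of "t + of_int n * L" "nat (- n)"] by simp
  qed
qed

lemma periodic_range:
  fixes f :: "real \<Rightarrow> 'a"
  assumes periodic: "\<And>t. f (t + L) = f t" and "L > 0"
  shows "range f = f ` {0..L}"
proof -
  have "f t \<in> f ` {0..L}" for t
  proof
    let ?n = "\<lfloor>t / L\<rfloor>"
    show "t - of_int ?n * L \<in> {0..L}"
      using \<open>L > 0\<close> floor_divide_lower[of L t] floor_divide_upper[of L t]
      by (auto simp: algebra_simps)
    show "f t = f (t - of_int ?n * L)"
      using periodic_shift_int[of f L "t - of_int ?n * L" ?n] periodic by simp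
  qed
  then show ?thesis by auto
qed

lemma periodic_derivatives:
  fixes D :: "nat \<Rightarrow> real \<Rightarrow> 'a::real_normed_vector"
  assumes smooth: "\<And>k t. (D k has_vector_derivative D (Suc k) t) (at t)"
    and periodic: "\<And>t. D 0 (t + L) = D 0 t"
  shows "D k (t + L) = D k t"
proof (induction k arbitrary: t)
  case 0
  then show ?case using periodic by simp
next
  case (Suc k)
  have shift: "((\<lambda>s. s + L) has_vector_derivative 1) (at t)"
    by (auto intro!: derivative_eq_intros)
  have "((\<lambda>s. D k (s + L)) has_vector_derivative D (Suc k) (t + L)) (at t)"
    using vector_diff_chain_at[OF shift smooth[of k "t + L"]] by (simp add: o_def)
  then have "(D k has_vector_derivative D (Suc k) (t + L)) (at t)"
    using Suc by simp
  then show ?case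
    using vector_derivative_unique_at[OF _ smooth[of k t]] by blast
qed

lemma symp_eq_inner: "symp x y = x \<bullet> (snd y, - fst y)"
  by (cases x, cases y) (simp add: symp_def inner_commute)

lemma norm_swap_Pair: "norm (snd y, - fst y) = norm y"
  by (cases y) (simp add: norm_Pair add.commute)

lemma abs_symp_le: "\<bar>symp x y\<bar> \<le> norm x * norm y"
  using Cauchy_Schwarz_ineq2[of x "(snd y, - fst y)"]
  by (simp add: symp_eq_inner norm_swap_Pair)

lemma symp_commute: "symp x y = - symp y x"
  by (simp add: symp_def inner_commute)

lemma symp_self [simp]: "symp x x = 0"
  by (simp add: symp_def inner_commute)

lemma bounded_bilinear_symp: "bounded_bilinear symp"
proof
  show "\<exists>K. \<forall>x y. norm (symp x y) \<le> norm x * norm y * K"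
    by (intro exI[of _ 1] allI) (simp add: abs_symp_le)
qed (auto simp: symp_def algebra_simps)

lemma has_real_derivative_symp:
  assumes "(a has_vector_derivative a') (at t)" "(b has_vector_derivative b') (at t)"
  shows "((\<lambda>t. symp (a t) (b t)) has_real_derivative symp a' (b t) + symp (a t) b') (at t)"
  using bounded_bilinear.has_vector_derivative[OF bounded_bilinear_symp assms]
  by (simp add: has_real_derivative_iff_has_vector_derivative add.commute)

lemma norm_diff_le_of_vector_derivative_bound:
  fixes g :: "real \<Rightarrow> 'a::real_normed_vector"
  assumes deriv: "\<And>t. (g has_vector_derivative g' t) (at t)"
    and bound: "\<And>t. norm (g' t) \<le> M"
  shows "norm (g b - g a) \<le> M * \<bar>b - a\<bar>"
proof -
  have "norm (g b - g a) \<le> M * norm (b - a)"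
  proof (rule differentiable_bound[where S = UNIV and f' = "\<lambda>t h. h *\<^sub>R g' t"])
    fix t
    show "(g has_derivative (\<lambda>h. h *\<^sub>R g' t)) (at t within UNIV)"
      using deriv[of t] by (simp add: has_vector_derivative_def)
    show "onorm (\<lambda>h::real. h *\<^sub>R g' t) \<le> M"
      using bound[of t] by (simp add: onorm_scaleR_left[OF bounded_linear_ident] onorm_id)
  qed auto
  then show ?thesis by simp
qed

lemma taylor2_lower_bound:
  fixes f f' f'' :: "real \<Rightarrow> real"
  assumes d1: "\<And>t. (f has_real_derivative f' t) (at t)"
    and d2: "\<And>t. (f' has_real_derivative f'' t) (at t)"
    and lower: "\<And>t. min c x \<le> t \<Longrightarrow> t \<le> max c x \<Longrightarrow> m \<le> f'' t"
  shows "f c + f' c * (x - c) + m / 2 * (x - c)^2 \<le> f x"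
proof (cases "x = c")
  case False
  define diff where "diff k = (if k = 0 then f else if k = 1 then f' else f'')" for k :: nat
  have "\<forall>k t. k < 2 \<and> min c x \<le> t \<and> t \<le> max c x \<longrightarrow>
      (diff k has_real_derivative diff (Suc k) t) (at t)"
    using d1 d2 by (auto simp: diff_def less_2_cases_iff)
  from Taylor[of 2 diff f, OF _ _ this _ _ _ _ False]
  obtain t where between: "if x < c then x < t \<and> t < c else c < t \<and> t < x"
    and expansion: "f x = (\<Sum>k<2. diff k c / fact k * (x - c)^k) + diff 2 t / fact 2 * (x - c)^2"
    by (auto simp: diff_def)
  have t: "min c x \<le> t" "t \<le> max c x"
    using between by (auto split: if_splits)
  have taylor: "f x = f c + f' c * (x - c) + f'' t / 2 * (x - c)^2"
    using expansion by (simp add: diff_def numeral_2_eq_2)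
  have "m / 2 * (x - c)^2 \<le> f'' t / 2 * (x - c)^2"
    using lower[OF t] by (intro mult_right_mono) auto
  then show ?thesis using taylor by linarith
qed simp

lemma taylor2_positive:
  fixes f f' f'' :: "real \<Rightarrow> real"
  assumes d1: "\<And>t. (f has_real_derivative f' t) (at t)"
    and d2: "\<And>t. (f' has_real_derivative f'' t) (at t)"
    and lower: "\<And>t. \<bar>t - c\<bar> \<le> \<bar>h\<bar> \<Longrightarrow> m \<le> f'' t"
    and small: "\<bar>f c\<bar> + \<bar>f' c\<bar> * \<bar>h\<bar> < m / 2 * h^2"
  shows "0 < f (c + h)"
proof -
  have "m \<le> f'' t" if "min c (c + h) \<le> t" "t \<le> max c (c + h)" for t
    using that by (intro lower) (auto simp: abs_le_iff min_def max_def split: if_splits)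
  then have "f c + f' c * h + m / 2 * h^2 \<le> f (c + h)"
    using taylor2_lower_bound[OF d1 d2, of c "c + h" m] by simp
  then show ?thesis
    using small abs_ge_minus_self[of "f c"] abs_ge_minus_self[of "f' c * h"]
    by (simp add: abs_mult)
qed

lemma convex_no_three_zeros:
  fixes f f' f'' :: "real \<Rightarrow> real"
  assumes d1: "\<And>t. (f has_real_derivative f' t) (at t)"
    and d2: "\<And>t. (f' has_real_derivative f'' t) (at t)"
    and convex: "\<And>t. a \<le> t \<Longrightarrow> t \<le> b \<Longrightarrow> 0 < f'' t"
    and order: "a \<le> x" "x < y" "y < z" "z \<le> b"
    and zeros: "f x = 0" "f y = 0" "f z = 0"
  shows False
proof -
  have critical_point: "\<exists>u. p < u \<and> u < q \<and> f' u = 0" if "p < q" "f p = f q" for p q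
  proof -
    have "continuous_on {p..q} f"
      using d1 by (intro continuous_at_imp_continuous_on ballI DERIV_isCont)
    with Rolle[OF that] obtain u where "p < u" "u < q" "(f has_real_derivative 0) (at u)"
      using d1 real_differentiable_def by blast
    then show ?thesis by (metis DERIV_unique d1)
  qed
  obtain u where u: "x < u" "u < y" "f' u = 0" using critical_point[of x y] order zeros by auto
  obtain v where v: "y < v" "v < z" "f' v = 0" using critical_point[of y z] order zeros by auto
  have "f' u < f' v"
  proof (rule DERIV_pos_imp_increasing[of u v f'])
    fix s assume "u \<le> s" "s \<le> v"
    then show "\<exists>y. (f' has_real_derivative y) (at s) \<and> 0 < y"
      using d2 convex[of s] order u v by fastforce
  qed (use u v in simp)
  with u v show False by simp
qed

lemma exists_second_zero:
  fixes f f' :: "real \<Rightarrow> real"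
  assumes d1: "\<And>t. (f has_real_derivative f' t) (at t)"
    and ends: "0 < f a" "0 < f b"
    and z: "a < z" "z < b" "f z = 0" "f' z \<noteq> 0"
  obtains w where "a < w" "w < b" "w \<noteq> z" "f w = 0"
proof -
  have cont: "continuous_on S f" for S
    using d1 by (intro continuous_at_imp_continuous_on ballI DERIV_isCont)
  consider "f' z < 0" | "f' z > 0" using z(4) by linarith
  then show ?thesis
  proof cases
    case 1
    obtain d where d: "d > 0" "\<And>h. 0 < h \<Longrightarrow> h < d \<Longrightarrow> f (z + h) < f z"
      using DERIV_neg_dec_right[OF d1 1] by blast
    define h where "h = min (d / 2) ((b - z) / 2)"
    have h: "0 < h" "h < d" "h < b - z"
      using d(1) z unfolding h_def by (auto simp: min_less_iff_disj)
    define p where "p = z + h"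
    have p: "z < p" "p < b" "f p < 0"
      using h d(2)[of h] z unfolding p_def by auto
    obtain w where w: "p \<le> w" "w \<le> b" "f w = 0"
      using IVT'[of f p 0 b, OF _ _ _ cont] p ends by auto
    moreover have "w \<noteq> b" using w ends by auto
    ultimately show ?thesis using p z by (intro that[of w]) auto
  next
    case 2
    obtain d where d: "d > 0" "\<And>h. 0 < h \<Longrightarrow> h < d \<Longrightarrow> f (z - h) < f z"
      using DERIV_pos_inc_left[OF d1 2] by blast
    define h where "h = min (d / 2) ((z - a) / 2)"
    have h: "0 < h" "h < d" "h < z - a"
      using d(1) z unfolding h_def by (auto simp: min_less_iff_disj)
    define p where "p = z - h"
    have p: "a < p" "p < z" "f p < 0"
      using h d(2)[of h] z unfolding p_def by auto
    obtain w where w: "a \<le> w" "w \<le> p" "f w = 0"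
      using IVT2'[of f p 0 a, OF _ _ _ cont] p ends by auto
    moreover have "w \<noteq> a" using w ends by auto
    ultimately show ?thesis using p z by (intro that[of w]) auto
  qed
qed

lemma card_convex_zeros_eq_0_or_2:
  fixes f f' f'' :: "real \<Rightarrow> real"
  assumes d1: "\<And>t. (f has_real_derivative f' t) (at t)"
    and d2: "\<And>t. (f' has_real_derivative f'' t) (at t)"
    and convex: "\<And>t. a \<le> t \<Longrightarrow> t \<le> b \<Longrightarrow> 0 < f'' t"
    and ends: "0 < f a" "0 < f b"
    and simple: "\<And>t. a < t \<Longrightarrow> t < b \<Longrightarrow> f t = 0 \<Longrightarrow> f' t \<noteq> 0"
  shows "finite {t. a < t \<and> t < b \<and> f t = 0} \<and>
    (card {t. a < t \<and> t < b \<and> f t = 0} = 0 \<or> card {t. a < t \<and> t < b \<and> f t = 0} = 2)"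
proof (cases "\<exists>z. a < z \<and> z < b \<and> f z = 0")
  case True
  let ?S = "{t. a < t \<and> t < b \<and> f t = 0}"
  obtain z where z: "a < z" "z < b" "f z = 0" using True by blast
  obtain w where w: "a < w" "w < b" "w \<noteq> z" "f w = 0"
    using exists_second_zero[OF d1 ends z simple[OF z]] by blast
  have no_three: False if "x \<in> ?S" "y \<in> ?S" "v \<in> ?S" "x < y" "y < v" for x y v
    using convex_no_three_zeros[of f f' f'' a b x y v, OF d1 d2 convex] that by auto
  have "?S = {z, w}"
  proof (intro equalityI subsetI)
    fix u assume u: "u \<in> ?S"
    show "u \<in> {z, w}"
    proof (rule ccontr)
      assume "u \<notin> {z, w}"
      then consider "u < z" "z < w" | "u < w" "w < z" | "z < u" "u < w"
        | "w < u" "u < z" | "z < w" "w < u" | "w < z" "z < u"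
        using w(3) by (auto simp: neq_iff)
      then show False
        by cases (use no_three u z w in blast)+
    qed
  qed (use z w in auto)
  then show ?thesis using w by simp
next
  case False
  then have "{t. a < t \<and> t < b \<and> f t = 0} = {}" by blast
  then show ?thesis by (metis card.empty finite.emptyI)
qed

lemma bounded_periodic_derivatives:
  fixes D :: "nat \<Rightarrow> real \<Rightarrow> 'a::real_normed_vector"
  assumes smooth: "\<And>k t. (D k has_vector_derivative D (Suc k) t) (at t)"
    and periodic: "\<And>t. D 0 (t + L) = D 0 t"
    and "L > 0" and "finite K"
  obtains M where "M > 0" "\<And>k t. k \<in> K \<Longrightarrow> norm (D k t) \<le> M"
proof -
  have "continuous_on {0..L} (D k)" for k
    by (intro continuous_at_imp_continuous_on ballI has_vector_derivative_continuous[OF smooth])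
  then have "compact (\<Union>k\<in>K. D k ` {0..L})"
    using \<open>finite K\<close> by (intro compact_UN compact_continuous_image) auto
  then obtain M where "M > 0" and M: "\<And>x. x \<in> (\<Union>k\<in>K. D k ` {0..L}) \<Longrightarrow> norm x \<le> M"
    using compact_imp_bounded bounded_pos by metis
  have "range (D k) = D k ` {0..L}" for k
    using periodic_range[of "D k" L] periodic_derivatives[of D L k, OF smooth periodic] \<open>L > 0\<close>
    by blast
  then have "D k t \<in> D k ` {0..L}" for k t
    by (metis rangeI)
  then show ?thesis
    using that[OF \<open>M > 0\<close>] M by blast
qed

lemma has_real_derivative_symp_normal:
  fixes D :: "nat \<Rightarrow> real \<Rightarrow> (real^'n) \<times> (real^'n)"
  assumes smooth: "\<And>k t. (D k has_vector_derivative D (Suc k) t) (at t)"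
  shows "((\<lambda>t. symp (D (Suc k) t) (P - D 0 t)) has_real_derivative
    symp (D (Suc (Suc k)) t) (P - D 0 t) - symp (D (Suc k) t) (D 1 t)) (at t)"
proof -
  have "((\<lambda>t. P - D 0 t) has_vector_derivative - D 1 t) (at t)"
    using smooth[of 0 t] by (auto intro!: derivative_eq_intros)
  from has_real_derivative_symp[OF smooth this] show ?thesis
    by (simp add: bounded_bilinear.minus_right[OF bounded_bilinear_symp])
qed

lemma abs_symp_le_half_near_curve:
  fixes D :: "nat \<Rightarrow> real \<Rightarrow> (real^'n) \<times> (real^'n)"
  assumes smooth: "\<And>k t. (D k has_vector_derivative D (Suc k) t) (at t)"
    and bounded: "\<And>k t. k \<in> {1, 2, 3} \<Longrightarrow> norm (D k t) \<le> M"
    and \<epsilon>: "\<epsilon> \<le> 1" "4 * M^2 * \<epsilon> \<le> 1"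
    and near: "16 * M * norm (P - D 0 t0) < \<epsilon>^2"
    and t: "\<bar>t - t0\<bar> \<le> \<epsilon>"
    and k: "k \<in> {1, 2, 3}"
  shows "\<bar>symp (D k t) (P - D 0 t)\<bar> \<le> 1 / 2"
proof -
  have "0 \<le> M" using order_trans[OF norm_ge_zero bounded[of 1 0]] by simp
  have "\<epsilon>^2 \<le> 1" using \<epsilon>(1) t by (simp add: power_le_one)
  have "(D 0 has_vector_derivative D 1 s) (at s)" "norm (D 1 s) \<le> M" for s
    using smooth[of 0 s] bounded[of 1 s] by simp_all
  then have "norm (D 0 t0 - D 0 t) \<le> M * \<bar>t0 - t\<bar>"
    by (rule norm_diff_le_of_vector_derivative_bound)
  also have "\<dots> \<le> M * \<epsilon>"
    using t \<open>0 \<le> M\<close> by (intro mult_left_mono) (auto simp: abs_minus_commute)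
  finally have "norm (P - D 0 t) \<le> norm (P - D 0 t0) + M * \<epsilon>"
    by (rule norm_diff_triangle_le[OF order_refl])
  then have "M * norm (P - D 0 t) \<le> M * (norm (P - D 0 t0) + M * \<epsilon>)"
    using \<open>0 \<le> M\<close> by (rule mult_left_mono)
  moreover have "\<bar>symp (D k t) (P - D 0 t)\<bar> \<le> M * norm (P - D 0 t)"
    using abs_symp_le[of "D k t" "P - D 0 t"] mult_right_mono[OF bounded[OF k, of t] norm_ge_zero[of "P - D 0 t"]]
    by linarith
  ultimately show ?thesis
    using near \<epsilon>(2) \<open>\<epsilon>^2 \<le> 1\<close> by (simp add: power2_eq_square algebra_simps)
qed

lemma local_multiplicity_0_or_2:
  fixes D :: "nat \<Rightarrow> real \<Rightarrow> (real^'n) \<times> (real^'n)"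
  assumes smooth: "\<And>k t. (D k has_vector_derivative D (Suc k) t) (at t)"
    and normalized: "\<And>t. symp (D 1 t) (D 2 t) = 1"
    and bounded: "\<And>k t. k \<in> {1, 2, 3} \<Longrightarrow> norm (D k t) \<le> M"
    and \<epsilon>: "0 < \<epsilon>" "\<epsilon> \<le> 1" "4 * M^2 * \<epsilon> \<le> 1"
    and near: "16 * M * norm (P - D 0 t0) < \<epsilon>^2"
    and off_wall: "P \<notin> wall (D 0) (D 1) (D 2)"
  shows "finite {t. \<bar>t - t0\<bar> < \<epsilon> \<and> symp (D 1 t) (P - D 0 t) = 0} \<and>
    (card {t. \<bar>t - t0\<bar> < \<epsilon> \<and> symp (D 1 t) (P - D 0 t) = 0} = 0 \<or>
     card {t. \<bar>t - t0\<bar> < \<epsilon> \<and> symp (D 1 t) (P - D 0 t) = 0} = 2)"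
proof -
  define f where "f = (\<lambda>t. symp (D 1 t) (P - D 0 t))"
  define f' where "f' = (\<lambda>t. symp (D 2 t) (P - D 0 t))"
  define f'' where "f'' = (\<lambda>t. symp (D 3 t) (P - D 0 t) + 1)"
  have d1: "(f has_real_derivative f' t) (at t)" for t
    using has_real_derivative_symp_normal[of D 0 P t, OF smooth]
    by (simp add: f_def f'_def numeral_2_eq_2)
  have d2: "(f' has_real_derivative f'' t) (at t)" for t
    using has_real_derivative_symp_normal[of D 1 P t, OF smooth] normalized[of t] symp_commute[of "D 1 t"]
    by (simp add: f'_def f''_def numeral_2_eq_2 numeral_3_eq_3)
  have symp_le: "\<bar>symp (D k t) v\<bar> \<le> M * norm v" if "k \<in> {1, 2, 3}" for k t v
    using abs_symp_le[of "D k t" v] mult_right_mono[OF bounded[OF that, of t] norm_ge_zero[of v]]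
    by linarith
  have convex: "1 / 2 \<le> f'' t" if "\<bar>t - t0\<bar> \<le> \<epsilon>" for t
    using abs_symp_le_half_near_curve[OF smooth bounded \<epsilon>(2,3) near that, of 3]
    by (simp add: f''_def abs_le_iff)
  have ends: "0 < f (t0 + h)" if "\<bar>h\<bar> = \<epsilon>" for h
  proof (rule taylor2_positive[OF d1 d2])
    show "1 / 2 \<le> f'' t" if "\<bar>t - t0\<bar> \<le> \<bar>h\<bar>" for t
      using convex that \<open>\<bar>h\<bar> = \<epsilon>\<close> by simp
    have "\<bar>f' t0\<bar> * \<bar>h\<bar> \<le> \<bar>f' t0\<bar>"
      using \<open>\<bar>h\<bar> = \<epsilon>\<close> \<epsilon>(2) by (simp add: mult_left_le)
    moreover have "\<bar>f t0\<bar> \<le> M * norm (P - D 0 t0)" "\<bar>f' t0\<bar> \<le> M * norm (P - D 0 t0)"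
      using symp_le[of 1 t0] symp_le[of 2 t0] by (simp_all add: f_def f'_def)
    moreover have "h^2 = \<epsilon>^2" "0 < \<epsilon>^2"
      using \<open>\<bar>h\<bar> = \<epsilon>\<close> \<epsilon>(1) by (metis power2_abs, simp)
    ultimately show "\<bar>f t0\<bar> + \<bar>f' t0\<bar> * \<bar>h\<bar> < 1 / 2 / 2 * h^2"
      using near by linarith
  qed
  have simple: "f' t \<noteq> 0" if "f t = 0" for t
  proof
    assume "f' t = 0"
    with that have "symp (P - D 0 t) (D 1 t) = 0" "symp (P - D 0 t) (D 2 t) = 0"
      by (simp_all add: f_def f'_def symp_commute[of "P - D 0 t"])
    with off_wall show False by (auto simp: wall_def)
  qed
  have zeros_eq: "{t. \<bar>t - t0\<bar> < \<epsilon> \<and> symp (D 1 t) (P - D 0 t) = 0} =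
      {t. t0 - \<epsilon> < t \<and> t < t0 + \<epsilon> \<and> f t = 0}"
    by (auto simp: f_def abs_less_iff)
  have "0 < f'' t" if "t0 - \<epsilon> \<le> t" "t \<le> t0 + \<epsilon>" for t
    using convex[of t] that by (simp add: abs_le_iff)
  moreover have "0 < f (t0 - \<epsilon>)" "0 < f (t0 + \<epsilon>)"
    using ends[of "- \<epsilon>"] ends[of \<epsilon>] \<epsilon>(1) by simp_all
  ultimately show ?thesis
    unfolding zeros_eq using card_convex_zeros_eq_0_or_2[OF d1 d2 _ _ _ simple] by blast
qed

theorem mainTheorem16:
  fixes D :: "nat \<Rightarrow> real \<Rightarrow> (real^'n) \<times> (real^'n)" and L :: real
  assumes smooth: "\<And>k t. (D k has_vector_derivative D (Suc k) t) (at t)"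
    and L_pos: "L > 0"
    and closed: "\<And>t. D 0 (t + L) = D 0 t"
    and normalized: "\<And>t. symp (D 1 t) (D 2 t) = 1"
  shows "\<exists>\<epsilon>>0. \<epsilon> < L / 2 \<and> (\<exists>\<delta>>0. \<forall>t0 P.
           norm (P - D 0 t0) < \<delta> \<and> P \<notin> wall (D 0) (D 1) (D 2) \<longrightarrow>
           (let S = {t. \<bar>t - t0\<bar> < \<epsilon> \<and> symp (D 1 t) (P - D 0 t) = 0}
            in finite S \<and> (card S = 0 \<or> card S = 2)))"
proof -
  obtain M where M: "M > 0" and bounded: "\<And>k t. k \<in> {1, 2, 3} \<Longrightarrow> norm (D k t) \<le> M"
    using bounded_periodic_derivatives[of D L "{1, 2, 3}", OF smooth closed L_pos] by auto
  define \<epsilon> where "\<epsilon> = min (L / 4) (min 1 (1 / (4 * M^2)))"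
  have "\<epsilon> \<le> 1 / (4 * M^2)"
    unfolding \<epsilon>_def by linarith
  then have \<epsilon>: "0 < \<epsilon>" "\<epsilon> < L / 2" "\<epsilon> \<le> 1" "4 * M^2 * \<epsilon> \<le> 1"
    using L_pos M by (auto simp: \<epsilon>_def field_simps)
  have "16 * M * norm (P - D 0 t0) < \<epsilon>^2" if "norm (P - D 0 t0) < \<epsilon>^2 / (16 * M)" for P t0
    using that M by (simp add: pos_less_divide_eq algebra_simps)
  moreover have "0 < \<epsilon>^2 / (16 * M)" using \<epsilon>(1) M by simp
  ultimately show ?thesis
    using \<epsilon> local_multiplicity_0_or_2[OF smooth normalized bounded \<epsilon>(1,3,4)]
    unfolding Let_def by blast
qed

end
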